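(* Let $g:\mathbb{R}^r\to\mathbb{R}^{\ell}$ and $m:\mathcal{A}\to\mathbb{R}^{\ell}$ (with $\mathcal{A}\subset\mathbb{R}^s$) be given vector-valued functions, let $\{P_1(\cdot|\theta):\theta\in\Theta\}$, $\Theta\subset\mathbb{R}^d$, be a parametric family of probability measures on $(\mathbb{R}^r,\mathcal{B}(\mathbb{R}^r))$, and for $\alpha\in\mathcal{A}$ let $$\mathcal{M}_\alpha=\Big\{Q \text{ finite signed measure on } \mathbb{R}^r:\ \int dQ=1,\ \int g\,dQ=m(\alpha)\Big\}.$$ Let $P_T$ be a given mixture distribution of the form $P_T=\lambda^*P_1(\cdot|\theta^* )+(1-\lambda^* )P_0^*$ with $\lambda^*\in(0,1)$, $\theta^*\in\Theta$, $P_0^*\in\mathcal{M}_{\alpha^*}$, $\alpha^*\in\mathcal{A}$. Put $m^*=\int g(x)\,dP_T(x)$ and $m_1(\theta)=\int g(x)\,dP_1(x|\theta)$. Suppose that the system of equations $$\frac{1}{1-\lambda}m^*-\frac{\lambda}{1-\lambda}m_1(\theta)=m(\alpha)$$ in the unknowns $(\lambda,\theta,\alpha)\in(0,1)\times\Theta\times\mathcal{A}$ has a unique solution $(\lambda^*,\theta^*,\alpha^* )$. Then whenever $$P_T=\lambda P_1(\cdot|\theta)+(1-\lambda)P_0=\tilde\lambda P_1(\cdot|\tilde\theta)+(1-\tilde\lambda)\tilde P_0$$ with $\lambda,\tilde\lambda\in(0,1)$, $\theta,\tilde\theta\in\Theta$, $P_0\in\mathcal{M}_\alpha$, $\tilde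 P_0\in\mathcal{M}_{\tilde\alpha}$, $\alpha,\tilde\alpha\in\mathcal A$, we have $\lambda=\tilde\lambda$, $\theta=\tilde\theta$ and $P_0=\tilde P_0$; i.e. the semiparametric mixture model is identifiable at $P_T$.
   Context: A two-component semiparametric mixture model subject to linear constraints is a probability measure of the form $P(\cdot|\phi)=\lambda P_1(\cdot|\theta)+(1-\lambda)P_0$ with $\phi=(\lambda,\theta,\alpha)$, $\lambda\in(0,1)$, $\theta\in\Theta$, and $P_0\in\mathcal{M}_\alpha$. It is called identifiable if any two such representations of the same measure have equal $\lambda$, equal $\theta$ and equal $P_0$. *)

theory Defs
  imports "HOL-Probability.Probability"
begin

text \<open>A finite signed measure on the Borel sets is represented by its set function
  Q :: 'a set \<Rightarrow> real (value 0 outside the Borel sets).\<close>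

definition signed_decomp :: "('a::topological_space set \<Rightarrow> real) \<Rightarrow> 'a measure \<Rightarrow> 'a measure \<Rightarrow> bool" where
  "signed_decomp Q \<mu> \<nu> \<longleftrightarrow> finite_measure \<mu> \<and> finite_measure \<nu> \<and>
     sets \<mu> = sets borel \<and> sets \<nu> = sets borel \<and> Q = (\<lambda>A. measure \<mu> A - measure \<nu> A)"

definition finite_signed_measure :: "('a::topological_space set \<Rightarrow> real) \<Rightarrow> bool" where
  "finite_signed_measure Q \<longleftrightarrow> (\<exists>\<mu> \<nu>. signed_decomp Q \<mu> \<nu>)"

text \<open>g is integrable w.r.t. the signed measure Q (i.e. w.r.t. |Q|): equivalently, for some
  Jordan-type decomposition Q = mu - nu, g is integrable w.r.t. mu and nu.\<close>
definition signed_integrable :: "('a::topological_space set \<Rightarrow> real) \<Rightarrow> ('a \<Rightarrow> 'b::{banach,second_countable_topology}) \<Rightarrow> bool" where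
  "signed_integrable Q g \<longleftrightarrow> (\<exists>\<mu> \<nu>. signed_decomp Q \<mu> \<nu> \<and> integrable \<mu> g \<and> integrable \<nu> g)"

definition signed_integral :: "('a::topological_space set \<Rightarrow> real) \<Rightarrow> ('a \<Rightarrow> 'b::{banach,second_countable_topology}) \<Rightarrow> 'b" where
  "signed_integral Q g = (THE v. \<exists>\<mu> \<nu>. signed_decomp Q \<mu> \<nu> \<and> integrable \<mu> g \<and> integrable \<nu> g
                                  \<and> v = integral\<^sup>L \<mu> g - integral\<^sup>L \<nu> g)"

definition Mset :: "('a::topological_space \<Rightarrow> 'b::{banach,second_countable_topology}) \<Rightarrow> ('c \<Rightarrow> 'b) \<Rightarrow> 'c \<Rightarrow> ('a set \<Rightarrow> real) set" where
  "Mset g m \<alpha> = {Q. finite_signed_measure Q \<and> signed_integrable Q g \<and> Q UNIV = 1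
                     \<and> signed_integral Q g = m \<alpha>}"

definition mixture :: "real \<Rightarrow> 'a measure \<Rightarrow> ('a set \<Rightarrow> real) \<Rightarrow> ('a set \<Rightarrow> real)" where
  "mixture l P Q = (\<lambda>A. l * measure P A + (1 - l) * Q A)"

end

theory Submission imports Defs begin

text \<open>Integrating g against any representation P_T = lambda P_1(theta) + (1 - lambda) P_0 with
  P_0 in M_alpha gives m* = lambda m_1(theta) + (1 - lambda) m(alpha), i.e. (lambda, theta, alpha)
  solves the moment equation; by uniqueness of its solution lambda and theta are the true
  parameters, and P_0 is then recovered from P_T by cancellation.
  The analytic content is that the integral against a finite signed measure Q is independent of
  the decomposition Q = mu - nu and is affine along mixtures. Both reduce to additivity of the
  integral with respect to the sum of two measures, because mu - nu = mu' - nu' means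
  mu + nu' = mu' + nu.\<close>

definition add_measure :: "'a measure \<Rightarrow> 'a measure \<Rightarrow> 'a measure" where
  "add_measure M N = measure_of (space M) (sets M) (\<lambda>A. emeasure M A + emeasure N A)"

lemma sets_add_measure [simp, measurable_cong]: "sets (add_measure M N) = sets M"
  unfolding add_measure_def by (simp add: sets.sigma_sets_eq)

lemma space_add_measure [simp]: "space (add_measure M N) = space M"
  unfolding add_measure_def by (simp add: space_measure_of_conv)

lemma emeasure_add_measure [simp]:
  assumes "sets N = sets M" "A \<in> sets M"
  shows "emeasure (add_measure M N) A = emeasure M A + emeasure N A"
  unfolding add_measure_def
proof (rule emeasure_measure_of_sigma)
  show "sigma_algebra (space M) (sets M)" by (rule sets.sigma_algebra_axioms)
  show "positive (sets M) (\<lambda>A. emeasure M A + emeasure N A)"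
    by (simp add: positive_def)
  show "countably_additive (sets M) (\<lambda>A. emeasure M A + emeasure N A)"
  proof (rule countably_additiveI)
    fix F :: "nat \<Rightarrow> 'a set"
    assume F: "range F \<subseteq> sets M" "disjoint_family F" "\<Union> (range F) \<in> sets M"
    have "(\<Sum>i. emeasure M (F i) + emeasure N (F i)) = (\<Sum>i. emeasure M (F i)) + (\<Sum>i. emeasure N (F i))"
      by (rule suminf_add[symmetric]) auto
    also have "\<dots> = emeasure M (\<Union> (range F)) + emeasure N (\<Union> (range F))"
      using F assms(1) by (simp add: suminf_emeasure)
    finally show "(\<Sum>i. emeasure M (F i) + emeasure N (F i)) = emeasure M (\<Union> (range F)) + emeasure N (\<Union> (range F))" .
  qed
qed fact

lemma finite_measure_add_measure:
  assumes "finite_measure M" "finite_measure N" "sets N = sets M"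
  shows "finite_measure (add_measure M N)"
  using assms by (intro finite_measureI) (simp add: finite_measure.emeasure_finite)

lemma measure_add_measure:
  assumes "finite_measure M" "finite_measure N" "sets N = sets M"
  shows "measure (add_measure M N) A = measure M A + measure N A"
proof (cases "A \<in> sets M")
  case True
  then show ?thesis
    using assms unfolding measure_def
    by (simp add: enn2real_plus finite_measure.emeasure_finite less_top[symmetric])
next
  case False
  then show ?thesis using assms(3) by (simp add: measure_notin_sets)
qed

lemma nn_integral_add_measure:
  assumes N: "sets N = sets M" and f: "f \<in> borel_measurable M"
  shows "nn_integral (add_measure M N) f = nn_integral M f + nn_integral N f"
  using f
proof (induct rule: borel_measurable_induct)
  case (cong f g)
  have "nn_integral K f = nn_integral K g" if "space K = space M" for K
    using cong that by (intro nn_integral_cong) auto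
  with cong sets_eq_imp_space_eq[OF N] show ?case by simp
next
  case (set A)
  then show ?case using N by simp
next
  case (mult u c)
  then show ?case using N
    by (simp add: nn_integral_cmult distrib_left measurable_cong_sets[OF N refl])
next
  case (add u v)
  then show ?case using N
    by (simp add: nn_integral_add measurable_cong_sets[OF N refl])
next
  case (seq U)
  have U_N: "U i \<in> borel_measurable N" for i using seq N by (simp add: measurable_cong_sets[OF N refl])
  have "nn_integral (add_measure M N) (SUP i. U i) = (SUP i. nn_integral (add_measure M N) (U i))"
    unfolding SUP_apply using seq
    by (intro nn_integral_monotone_convergence_SUP) (auto simp: measurable_cong_sets[OF sets_add_measure refl])
  also have "\<dots> = (SUP i. nn_integral M (U i) + nn_integral N (U i))" using seq by simp
  also have "\<dots> = (SUP i. nn_integral M (U i)) + (SUP i. nn_integral N (U i))"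
    using seq U_N by (intro ennreal_SUP_add) (auto simp: incseq_def le_fun_def intro!: nn_integral_mono)
  also have "\<dots> = nn_integral M (SUP i. U i) + nn_integral N (SUP i. U i)"
    unfolding SUP_apply using seq U_N by (simp add: nn_integral_monotone_convergence_SUP)
  finally show ?case .
qed

lemma integrable_add_measure_iff:
  fixes f :: "'a \<Rightarrow> 'b::{banach, second_countable_topology}"
  assumes N: "sets N = sets M"
  shows "integrable (add_measure M N) f \<longleftrightarrow> integrable M f \<and> integrable N f"
proof -
  have measurable_iff: "f \<in> borel_measurable (add_measure M N) \<longleftrightarrow> f \<in> borel_measurable M"
    "f \<in> borel_measurable N \<longleftrightarrow> f \<in> borel_measurable M"
    by (simp_all only: measurable_cong_sets[OF sets_add_measure refl] measurable_cong_sets[OF N refl])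
  show ?thesis
  proof (cases "f \<in> borel_measurable M")
    case False
    then show ?thesis using measurable_iff borel_measurable_integrable by blast
  next
    case True
    then have "(\<integral>\<^sup>+x. norm (f x) \<partial>add_measure M N) = (\<integral>\<^sup>+x. norm (f x) \<partial>M) + (\<integral>\<^sup>+x. norm (f x) \<partial>N)"
      by (intro nn_integral_add_measure[OF N]) measurable
    with True show ?thesis
      unfolding integrable_iff_bounded measurable_iff by simp
  qed
qed

lemma integral_add_measure:
  fixes f :: "'a \<Rightarrow> 'b::{banach, second_countable_topology}"
  assumes N: "sets N = sets M" and f: "integrable (add_measure M N) f"
  shows "integral\<^sup>L (add_measure M N) f = integral\<^sup>L M f + integral\<^sup>L N f"
  using f
proof (induct rule: integrable_induct)
  case (base A c)
  then have "A \<in> sets M" "emeasure M A < \<infinity>" "emeasure N A < \<infinity>"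
    using N by auto
  with N show ?case
    by (simp add: measure_def enn2real_plus scaleR_add_left sets.Int_space_eq2)
next
  case (add f g)
  with N show ?case
    by (simp add: integrable_add_measure_iff algebra_simps)
next
  case (lim f s)
  have dominated: "(\<lambda>i. integral\<^sup>L K (s i)) \<longlonglongrightarrow> integral\<^sup>L K f"
    if K: "space K = space M" "integrable K f" "\<And>i. integrable K (s i)" for K
  proof (rule integral_dominated_convergence[where w="\<lambda>x. 2 * norm (f x)"])
    show "f \<in> borel_measurable K" using K(2) by (rule borel_measurable_integrable)
    show "s i \<in> borel_measurable K" for i using K(3) by (rule borel_measurable_integrable)
    show "integrable K (\<lambda>x. 2 * norm (f x))" using K(2) by (intro integrable_mult_right integrable_norm)
    show "AE x in K. (\<lambda>i. s i x) \<longlonglongrightarrow> f x" using lim(3) K(1) by (intro AE_I2) simp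
    show "AE x in K. norm (s i x) \<le> 2 * norm (f x)" for i using lim(4) K(1) by (intro AE_I2) simp
  qed
  have integrable_MN: "integrable M f" "integrable N f" "integrable M (s i)" "integrable N (s i)" for i
    using lim(1,5) by (simp_all add: integrable_add_measure_iff[OF N])
  have "(\<lambda>i. integral\<^sup>L (add_measure M N) (s i)) \<longlonglongrightarrow> integral\<^sup>L (add_measure M N) f"
    using lim(1,5) by (intro dominated) simp_all
  moreover have "(\<lambda>i. integral\<^sup>L (add_measure M N) (s i)) \<longlonglongrightarrow> integral\<^sup>L M f + integral\<^sup>L N f"
    unfolding lim(2)
    using integrable_MN sets_eq_imp_space_eq[OF N] by (intro tendsto_add dominated) simp_all
  ultimately show ?case by (rule LIMSEQ_unique)
qed

lemma finite_measure_density_const: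
  assumes "finite_measure M" "c \<noteq> \<infinity>"
  shows "finite_measure (density M (\<lambda>_. c))"
  using assms by (intro finite_measureI)
    (simp add: emeasure_density_const ennreal_mult_eq_top_iff finite_measure.emeasure_finite)

lemma measure_density_const_nonneg:
  assumes "0 \<le> c"
  shows "measure (density M (\<lambda>_. ennreal c)) A = c * measure M A"
  using assms by (cases "A \<in> sets M") (simp_all add: measure_density_const measure_notin_sets)

lemma integrable_density_const:
  fixes g :: "'a \<Rightarrow> 'b::{banach, second_countable_topology}"
  assumes "0 \<le> c" "integrable M g"
  shows "integrable (density M (\<lambda>_. ennreal c)) g"
  using assms integrable_density[of g M "\<lambda>_. c"] by simp

lemma integral_density_const:
  fixes g :: "'a \<Rightarrow> 'b::{banach, second_countable_topology}"
  assumes "0 \<le> c" "g \<in> borel_measurable M"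
  shows "integral\<^sup>L (density M (\<lambda>_. ennreal c)) g = c *\<^sub>R integral\<^sup>L M g"
  using assms integral_density[of g M "\<lambda>_. c"] by simp

lemma signed_decomp_integral_unique:
  fixes g :: "'a::topological_space \<Rightarrow> 'b::{banach, second_countable_topology}"
  assumes decomp: "signed_decomp Q \<mu> \<nu>" "integrable \<mu> g" "integrable \<nu> g"
    and decomp': "signed_decomp Q \<mu>' \<nu>'" "integrable \<mu>' g" "integrable \<nu>' g"
  shows "integral\<^sup>L \<mu> g - integral\<^sup>L \<nu> g = integral\<^sup>L \<mu>' g - integral\<^sup>L \<nu>' g"
proof -
  have finite_measures: "finite_measure \<mu>" "finite_measure \<nu>" "finite_measure \<mu>'" "finite_measure \<nu>'"
    and sets: "sets \<mu> = sets borel" "sets \<nu> = sets borel" "sets \<mu>' = sets borel" "sets \<nu>' = sets borel"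
    and diff: "\<And>A. measure \<mu> A - measure \<nu> A = measure \<mu>' A - measure \<nu>' A"
    using decomp(1) decomp'(1) unfolding signed_decomp_def by metis+
  have sets_eq: "sets \<nu>' = sets \<mu>" "sets \<nu> = sets \<mu>'"
    using sets by simp_all
  have finite_sum: "finite_measure (add_measure \<mu> \<nu>')" "finite_measure (add_measure \<mu>' \<nu>)"
    using finite_measures sets_eq by (simp_all add: finite_measure_add_measure)
  have "add_measure \<mu> \<nu>' = add_measure \<mu>' \<nu>"
  proof (rule measure_eqI)
    show "sets (add_measure \<mu> \<nu>') = sets (add_measure \<mu>' \<nu>)"
      using sets by simp
    fix A
    have "measure (add_measure \<mu> \<nu>') A = measure (add_measure \<mu>' \<nu>) A"
      using finite_measures sets_eq diff[of A] by (simp add: measure_add_measure algebra_simps)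
    then show "emeasure (add_measure \<mu> \<nu>') A = emeasure (add_measure \<mu>' \<nu>) A"
      by (simp add: finite_measure.emeasure_eq_measure[OF finite_sum(1)]
          finite_measure.emeasure_eq_measure[OF finite_sum(2)])
  qed
  moreover have "integrable (add_measure \<mu> \<nu>') g" "integrable (add_measure \<mu>' \<nu>) g"
    using decomp decomp' sets_eq by (simp_all add: integrable_add_measure_iff)
  ultimately have "integral\<^sup>L \<mu> g + integral\<^sup>L \<nu>' g = integral\<^sup>L \<mu>' g + integral\<^sup>L \<nu> g"
    using sets_eq by (metis integral_add_measure)
  then show ?thesis by (simp add: algebra_simps)
qed

lemma signed_integral_decomp:
  fixes g :: "'a::topological_space \<Rightarrow> 'b::{banach, second_countable_topology}"
  assumes "signed_decomp Q \<mu> \<nu>" "integrable \<mu> g" "integrable \<nu> g"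
  shows "signed_integral Q g = integral\<^sup>L \<mu> g - integral\<^sup>L \<nu> g"
  unfolding signed_integral_def
proof (rule the_equality)
  show "\<exists>\<mu>' \<nu>'. signed_decomp Q \<mu>' \<nu>' \<and> integrable \<mu>' g \<and> integrable \<nu>' g \<and>
      integral\<^sup>L \<mu> g - integral\<^sup>L \<nu> g = integral\<^sup>L \<mu>' g - integral\<^sup>L \<nu>' g"
    using assms by blast
next
  fix v
  assume "\<exists>\<mu>' \<nu>'. signed_decomp Q \<mu>' \<nu>' \<and> integrable \<mu>' g \<and> integrable \<nu>' g \<and>
      v = integral\<^sup>L \<mu>' g - integral\<^sup>L \<nu>' g"
  then show "v = integral\<^sup>L \<mu> g - integral\<^sup>L \<nu> g"
    using signed_decomp_integral_unique[OF assms] by metis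
qed

lemma signed_decomp_mixture:
  assumes P: "finite_measure P" "sets P = sets borel" and l: "0 \<le> l" "l \<le> 1"
    and Q: "signed_decomp Q \<mu> \<nu>"
  shows "signed_decomp (mixture l P Q)
           (add_measure (density P (\<lambda>_. ennreal l)) (density \<mu> (\<lambda>_. ennreal (1 - l))))
           (density \<nu> (\<lambda>_. ennreal (1 - l)))"
proof -
  have "finite_measure \<mu>" "finite_measure \<nu>" "sets \<mu> = sets borel" "sets \<nu> = sets borel"
    and Q_eq: "Q = (\<lambda>A. measure \<mu> A - measure \<nu> A)"
    using Q unfolding signed_decomp_def by blast+
  with P l show ?thesis
    unfolding signed_decomp_def mixture_def Q_eq
    by (simp add: finite_measure_density_const finite_measure_add_measure measure_add_measure
        measure_density_const_nonneg fun_eq_iff algebra_simps)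
qed

lemma signed_integral_mixture:
  fixes g :: "'a::topological_space \<Rightarrow> 'b::{banach, second_countable_topology}"
  assumes P: "finite_measure P" "sets P = sets borel" "integrable P g" and l: "0 \<le> l" "l \<le> 1"
    and Q: "signed_integrable Q g"
  shows "signed_integral (mixture l P Q) g = l *\<^sub>R integral\<^sup>L P g + (1 - l) *\<^sub>R signed_integral Q g"
proof -
  obtain \<mu> \<nu> where decomp: "signed_decomp Q \<mu> \<nu>" "integrable \<mu> g" "integrable \<nu> g"
    using Q unfolding signed_integrable_def by blast
  define P\<^sub>l \<mu>\<^sub>l \<nu>\<^sub>l where "P\<^sub>l = density P (\<lambda>_. ennreal l)"
    and "\<mu>\<^sub>l = density \<mu> (\<lambda>_. ennreal (1 - l))" and "\<nu>\<^sub>l = density \<nu> (\<lambda>_. ennreal (1 - l))"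
  have sets: "sets \<mu>\<^sub>l = sets P\<^sub>l"
    using decomp(1) P(2) unfolding signed_decomp_def P\<^sub>l_def \<mu>\<^sub>l_def by simp
  have integrable: "integrable (add_measure P\<^sub>l \<mu>\<^sub>l) g" "integrable \<nu>\<^sub>l g"
    using P(3) decomp l sets
    by (simp_all add: integrable_add_measure_iff integrable_density_const P\<^sub>l_def \<mu>\<^sub>l_def \<nu>\<^sub>l_def)
  have "signed_integral (mixture l P Q) g = integral\<^sup>L (add_measure P\<^sub>l \<mu>\<^sub>l) g - integral\<^sup>L \<nu>\<^sub>l g"
    using signed_decomp_mixture[OF P(1,2) l decomp(1)] integrable
    unfolding P\<^sub>l_def \<mu>\<^sub>l_def \<nu>\<^sub>l_def by (rule signed_integral_decomp)
  also have "\<dots> = l *\<^sub>R integral\<^sup>L P g + (1 - l) *\<^sub>R (integral\<^sup>L \<mu> g - integral\<^sup>L \<nu> g)"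
    using integral_add_measure[OF sets integrable(1)] P(3) decomp(2,3) l
    by (simp add: integral_density_const P\<^sub>l_def \<mu>\<^sub>l_def \<nu>\<^sub>l_def scaleR_diff_right)
  finally show ?thesis
    by (simp add: signed_integral_decomp[OF decomp])
qed

lemma mixture_moment_equation:
  fixes g :: "'a::topological_space \<Rightarrow> 'b::{banach, second_countable_topology}"
  assumes P: "prob_space P" "sets P = sets borel" "integrable P g" and l: "0 < l" "l < 1"
    and Q: "Q \<in> Mset g m a"
  shows "(1 / (1 - l)) *\<^sub>R signed_integral (mixture l P Q) g - (l / (1 - l)) *\<^sub>R integral\<^sup>L P g = m a"
proof -
  have "signed_integral (mixture l P Q) g = l *\<^sub>R integral\<^sup>L P g + (1 - l) *\<^sub>R m a"
    using Q P l signed_integral_mixture[of P g l Q]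
    by (simp add: Mset_def prob_space_def)
  with l show ?thesis
    by (simp add: scaleR_add_right)
qed

lemma mixture_cancel_right:
  assumes "l \<noteq> 1" "mixture l P Q = mixture l P Q'"
  shows "Q = Q'"
proof
  fix A
  have "(1 - l) * Q A = (1 - l) * Q' A"
    using fun_cong[OF assms(2), of A] by (simp add: mixture_def)
  with assms(1) show "Q A = Q' A" by simp
qed

theorem proposition1:
  fixes g :: "real^'r \<Rightarrow> real^'l"
    and m :: "real^'s \<Rightarrow> real^'l"
    and \<A> :: "(real^'s) set"
    and \<Theta> :: "(real^'d) set"
    and P1 :: "real^'d \<Rightarrow> (real^'r) measure"
    and PT :: "(real^'r) set \<Rightarrow> real"
    and lams :: real and \<theta>s :: "real^'d" and \<alpha>s :: "real^'s" and P0s :: "(real^'r) set \<Rightarrow> real"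
    and lam lam' :: real and \<theta> \<theta>' :: "real^'d" and \<alpha> \<alpha>' :: "real^'s"
    and P0 P0' :: "(real^'r) set \<Rightarrow> real"
  assumes P1_prob: "\<And>t. t \<in> \<Theta> \<Longrightarrow> prob_space (P1 t) \<and> sets (P1 t) = sets borel"
    and g_int: "\<And>t. t \<in> \<Theta> \<Longrightarrow> integrable (P1 t) g"
    and true_params: "lams \<in> {0<..<1}" "\<theta>s \<in> \<Theta>" "\<alpha>s \<in> \<A>" "P0s \<in> Mset g m \<alpha>s"
    and PT_def: "PT = mixture lams (P1 \<theta>s) P0s"
    and unique: "\<And>l t a. l \<in> {0<..<1} \<Longrightarrow> t \<in> \<Theta> \<Longrightarrow> a \<in> \<A> \<Longrightarrow>
        ((1 / (1 - l)) *\<^sub>R signed_integral PT g - (l / (1 - l)) *\<^sub>R integral\<^sup>L (P1 t) g = m a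
         \<longleftrightarrow> (l, t, a) = (lams, \<theta>s, \<alpha>s))"
    and rep1: "lam \<in> {0<..<1}" "\<theta> \<in> \<Theta>" "\<alpha> \<in> \<A>" "P0 \<in> Mset g m \<alpha>" "PT = mixture lam (P1 \<theta>) P0"
    and rep2: "lam' \<in> {0<..<1}" "\<theta>' \<in> \<Theta>" "\<alpha>' \<in> \<A>" "P0' \<in> Mset g m \<alpha>'" "PT = mixture lam' (P1 \<theta>') P0'"
  shows "lam = lam' \<and> \<theta> = \<theta>' \<and> P0 = P0'"
proof -
  have true_mixing_params: "l = lams \<and> t = \<theta>s"
    if rep: "l \<in> {0<..<1}" "t \<in> \<Theta>" "a \<in> \<A>" "Q \<in> Mset g m a" "PT = mixture l (P1 t) Q" for l t a Q
  proof -
    have "(1 / (1 - l)) *\<^sub>R signed_integral PT g - (l / (1 - l)) *\<^sub>R integral\<^sup>L (P1 t) g = m a"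
      unfolding rep(5) using P1_prob[OF rep(2)] g_int[OF rep(2)] rep(1,4)
      by (intro mixture_moment_equation) auto
    then have "(l, t, a) = (lams, \<theta>s, \<alpha>s)"
      using unique[OF rep(1-3)] by blast
    then show ?thesis by simp
  qed
  have "lam = lam'" "\<theta> = \<theta>'"
    using true_mixing_params[OF rep1] true_mixing_params[OF rep2] by simp_all
  moreover have "P0 = P0'"
  proof (rule mixture_cancel_right)
    show "lam \<noteq> 1" using rep1(1) by simp
    show "mixture lam (P1 \<theta>) P0 = mixture lam (P1 \<theta>) P0'"
      using rep1(5) rep2(5) \<open>lam = lam'\<close> \<open>\<theta> = \<theta>'\<close> by simp
  qed
  ultimately show ?thesis by simp
qed

end
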